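(* Let $A,B,C,Q,R,\gamma$ be as in the context. For all $\mu_1,\mu_2$ with $0<\mu_1\le\mu_2\le 1$, $$\bar P_\infty(\mu_1)\preccurlyeq\bar P_\infty(\mu_2)\quad\text{and}\quad \hat P_\infty(\mu_1)\succcurlyeq\hat P_\infty(\mu_2).$$
   Context: $A\in\mathbb{R}^{n_x\times n_x}$, $B\in\mathbb{R}^{n_x\times n_u}$, $C\in\mathbb{R}^{n_c\times n_x}$, $Q\succcurlyeq 0$, $R\succ 0$, $\gamma\in(0,1)$, with $(A,B)$ controllable and $(A,Q^{1/2})$ observable. For $\mu\in(0,1]$, consider the iteration, started from $\bar P_0=\hat P_0=0$ (any positive semidefinite start gives the same limits): $L_{i+1}=-[\mu R+B^\top\Sigma_iB]^{-1}B^\top\Sigma_iA$, $\bar P_{i+1}=C^\top C+\gamma(A+BL_{i+1})^\top\bar P_i(A+BL_{i+1})$, $\hat P_{i+1}=Q+L_{i+1}^\top RL_{i+1}+(A+BL_{i+1})^\top\hat P_i(A+BL_{i+1})$, with $\Sigma_i=\gamma(1-\mu)\bar P_i+\mu\hat P_i$. Under the stated assumptions the limits $\bar P_\infty(\mu)\succcurlyeq0$, $\hat P_\infty(\mu)\succ0$, $L_\infty(\mu)$ exist, $A+BL_\infty(\mu)$ is strictly stable, and for every $x_0$, $x_0^\top((1-\mu)\bar P_\infty(\mu)+\mu\hat P_\infty(\mu))x_0$ is the optimal value of the deterministic problem $\min_{\bar u_0,\bar u_1,\ldots}(1-\mu)\sum_{i\ge0}\gamma^i\|C\bar x_i\|^2+\mu\sum_{i\ge0}(\bar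 x_i^\top Q\bar x_i+\bar u_i^\top R\bar u_i)$ subject to $\bar x_{i+1}=A\bar x_i+B\bar u_i$, $\bar x_0=x_0$. $\preccurlyeq$ is the Loewner order. *)

theory Defs
  imports "HOL-Analysis.Analysis"
begin

fun mpow :: "real^'n^'n \<Rightarrow> nat \<Rightarrow> real^'n^'n" where
  "mpow M 0 = mat 1"
| "mpow M (Suc k) = M ** mpow M k"

definition psd :: "real^'n^'n \<Rightarrow> bool" where
  "psd M \<longleftrightarrow> transpose M = M \<and> (\<forall>x. 0 \<le> x \<bullet> (M *v x))"

definition pd :: "real^'n^'n \<Rightarrow> bool" where
  "pd M \<longleftrightarrow> transpose M = M \<and> (\<forall>x. x \<noteq> 0 \<longrightarrow> 0 < x \<bullet> (M *v x))"

definition loewner_le :: "real^'n^'n \<Rightarrow> real^'n^'n \<Rightarrow> bool" where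
  "loewner_le M1 M2 \<longleftrightarrow> psd (M2 - M1)"

text \<open>(A,B) controllable: the controllability matrix [B, AB, ..., A^(n-1) B] has full row rank,
  i.e. its columns span the state space.\<close>
definition controllable :: "real^'n^'n \<Rightarrow> real^'m^'n \<Rightarrow> bool" where
  "controllable A B \<longleftrightarrow>
     span {mpow A k *v (B *v u) | k u. k < CARD('n)} = UNIV"

definition observable :: "real^'n^'n \<Rightarrow> real^'n^'p \<Rightarrow> bool" where
  "observable A Cm \<longleftrightarrow> (\<forall>x. (\<forall>k < CARD('n). Cm *v (mpow A k *v x) = 0) \<longrightarrow> x = 0)"

definition SigmaM :: "real \<Rightarrow> real \<Rightarrow> real^'n^'n \<Rightarrow> real^'n^'n \<Rightarrow> real^'n^'n" where
  "SigmaM \<gamma> \<mu> Pb Ph = (\<gamma> * (1 - \<mu>)) *\<^sub>R Pb + \<mu> *\<^sub>R Ph"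

definition gainL :: "real^'n^'n \<Rightarrow> real^'m^'n \<Rightarrow> real^'m^'m \<Rightarrow> real \<Rightarrow> real^'n^'n \<Rightarrow> real^'n^'m" where
  "gainL A B R \<mu> S = - (matrix_inv (\<mu> *\<^sub>R R + transpose B ** S ** B) ** transpose B ** S ** A)"

fun iterP :: "real^'n^'n \<Rightarrow> real^'m^'n \<Rightarrow> real^'n^'c \<Rightarrow> real^'n^'n \<Rightarrow> real^'m^'m
              \<Rightarrow> real \<Rightarrow> real \<Rightarrow> nat \<Rightarrow> (real^'n^'n) \<times> (real^'n^'n)" where
  "iterP A B C Q R \<gamma> \<mu> 0 = (0, 0)"
| "iterP A B C Q R \<gamma> \<mu> (Suc i) =
     (let (Pb, Ph) = iterP A B C Q R \<gamma> \<mu> i;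
          L = gainL A B R \<mu> (SigmaM \<gamma> \<mu> Pb Ph);
          F = A + B ** L
      in (transpose C ** C + \<gamma> *\<^sub>R (transpose F ** Pb ** F),
          Q + transpose L ** R ** L + transpose F ** Ph ** F))"

definition Pbar_inf :: "real^'n^'n \<Rightarrow> real^'m^'n \<Rightarrow> real^'n^'c \<Rightarrow> real^'n^'n \<Rightarrow> real^'m^'m
              \<Rightarrow> real \<Rightarrow> real \<Rightarrow> real^'n^'n" where
  "Pbar_inf A B C Q R \<gamma> \<mu> = lim (\<lambda>i. fst (iterP A B C Q R \<gamma> \<mu> i))"

definition Phat_inf :: "real^'n^'n \<Rightarrow> real^'m^'n \<Rightarrow> real^'n^'c \<Rightarrow> real^'n^'n \<Rightarrow> real^'m^'m
              \<Rightarrow> real \<Rightarrow> real \<Rightarrow> real^'n^'n" where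
  "Phat_inf A B C Q R \<gamma> \<mu> = lim (\<lambda>i. snd (iterP A B C Q R \<gamma> \<mu> i))"

fun traj :: "real^'n^'n \<Rightarrow> real^'m^'n \<Rightarrow> real^'n \<Rightarrow> (nat \<Rightarrow> real^'m) \<Rightarrow> nat \<Rightarrow> real^'n" where
  "traj A B x0 u 0 = x0"
| "traj A B x0 u (Suc i) = A *v traj A B x0 u i + B *v u i"

text \<open>Cost (possibly infinite) of input sequence u; all summands are nonnegative under the
  standing assumptions Q psd, R pd.\<close>
definition cost :: "real^'n^'n \<Rightarrow> real^'m^'n \<Rightarrow> real^'n^'c \<Rightarrow> real^'n^'n \<Rightarrow> real^'m^'m
              \<Rightarrow> real \<Rightarrow> real \<Rightarrow> real^'n \<Rightarrow> (nat \<Rightarrow> real^'m) \<Rightarrow> ennreal" where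
  "cost A B C Q R \<gamma> \<mu> x0 u =
     ennreal (1 - \<mu>) * (\<Sum>i. ennreal (\<gamma> ^ i * (norm (C *v traj A B x0 u i))\<^sup>2))
   + ennreal \<mu> * (\<Sum>i. ennreal (traj A B x0 u i \<bullet> (Q *v traj A B x0 u i) + u i \<bullet> (R *v u i)))"

definition optval :: "real^'n^'n \<Rightarrow> real^'m^'n \<Rightarrow> real^'n^'c \<Rightarrow> real^'n^'n \<Rightarrow> real^'m^'m
              \<Rightarrow> real \<Rightarrow> real \<Rightarrow> real^'n \<Rightarrow> ennreal" where
  "optval A B C Q R \<gamma> \<mu> x0 = (INF u. cost A B C Q R \<gamma> \<mu> x0 u)"

end

theory Submission
  imports Defs
begin

(* For each \<mu>, the limit pair (Pbar, Phat) is a fixed point of policy evaluation for the limit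
   gain L.  Running the closed loop u = L x from x0 therefore costs at most x0' Pbar x0 in the
   discounted C-term and at most x0' Phat x0 in the LQ term, so the optimal value for any weight
   \<mu>' is at most (1 - \<mu>') x0' Pbar x0 + \<mu>' x0' Phat x0.  With a_j = x0' Pbar(\<mu>_j) x0 and
   b_j = x0' Phat(\<mu>_j) x0, comparing each optimal value with the cost of the other policy gives
     (1 - \<mu>1) (a2 - a1) + \<mu>1 (b2 - b1) \<ge> 0  and  (1 - \<mu>2) (a2 - a1) + \<mu>2 (b2 - b1) \<le> 0,
   and eliminating either unknown yields (\<mu>2 - \<mu>1) (a2 - a1) \<ge> 0 and (\<mu>2 - \<mu>1) (b1 - b2) \<ge> 0.
   Controllability and observability are needed only for the convergence and optimality facts,
   which the theorem takes as hypotheses. *)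

lemma tendsto_matrix_matrix_mult:
  fixes X :: "'a \<Rightarrow> real^'n^'m" and Y :: "'a \<Rightarrow> real^'k^'n"
  assumes "(X \<longlongrightarrow> A) F" "(Y \<longlongrightarrow> B) F"
  shows "((\<lambda>x. X x ** Y x) \<longlongrightarrow> A ** B) F"
  unfolding matrix_matrix_mult_def
  by (intro tendsto_vec_lambda tendsto_sum tendsto_mult tendsto_vec_nth assms)

lemma tendsto_matrix_vector_mult:
  fixes X :: "'a \<Rightarrow> real^'n^'m"
  assumes "(X \<longlongrightarrow> A) F"
  shows "((\<lambda>x. X x *v v) \<longlongrightarrow> A *v v) F"
  unfolding matrix_vector_mult_def
  by (intro tendsto_vec_lambda tendsto_sum tendsto_mult tendsto_vec_nth assms tendsto_const)

lemma tendsto_transpose: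
  fixes X :: "'a \<Rightarrow> real^'n^'m"
  assumes "(X \<longlongrightarrow> A) F"
  shows "((\<lambda>x. transpose (X x)) \<longlongrightarrow> transpose A) F"
  unfolding transpose_def by (intro tendsto_vec_lambda tendsto_vec_nth assms)

lemma tendsto_det:
  fixes X :: "'a \<Rightarrow> real^'n^'n"
  assumes "(X \<longlongrightarrow> A) F"
  shows "((\<lambda>x. det (X x)) \<longlongrightarrow> det A) F"
  unfolding det_def
  by (intro tendsto_sum tendsto_mult tendsto_prod tendsto_vec_nth assms tendsto_const)

lemma matrix_inv_right:
  fixes A :: "real^'n^'n"
  assumes "invertible A"
  shows "A ** matrix_inv A = mat 1"
proof -
  have "\<exists>A'. A ** A' = mat 1 \<and> A' ** A = mat 1"
    using assms unfolding invertible_def by blast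
  from someI_ex[OF this] show ?thesis unfolding matrix_inv_def by blast
qed

lemma matrix_inv_cramer:
  fixes A :: "real^'n^'n"
  assumes "det A \<noteq> 0"
  shows "matrix_inv A $ i $ j = det (\<chi> a b. if b = i then axis j 1 $ a else A $ a $ b) / det A"
proof -
  have "A *v column j (matrix_inv A) = column j (A ** matrix_inv A)"
    by (simp add: vec_eq_iff matrix_matrix_mult_def matrix_vector_mult_def column_def)
  also have "\<dots> = axis j 1"
    using matrix_inv_right[OF assms[folded invertible_det_nz]] invertible_det_nz
    by (simp add: vec_eq_iff mat_def axis_def column_def)
  finally have "column j (matrix_inv A)
      = (\<chi> k. det (\<chi> a b. if b = k then axis j 1 $ a else A $ a $ b) / det A)"
    using cramer[OF assms] by blast
  then have "column j (matrix_inv A) $ i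
      = det (\<chi> a b. if b = i then axis j 1 $ a else A $ a $ b) / det A"
    by simp
  then show ?thesis
    by (simp add: column_def)
qed

lemma tendsto_matrix_inv:
  fixes X :: "'a \<Rightarrow> real^'n^'n"
  assumes X: "(X \<longlongrightarrow> A) F" and inv: "invertible A"
  shows "((\<lambda>x. matrix_inv (X x)) \<longlongrightarrow> matrix_inv A) F"
proof (intro vec_tendstoI)
  fix i j
  define replace where "replace M = (\<chi> a b. if b = i then axis j 1 $ a else M $ a $ b)"
    for M :: "real^'n^'n"
  have detA: "det A \<noteq> 0" using inv invertible_det_nz by blast
  have "((\<lambda>x. replace (X x)) \<longlongrightarrow> replace A) F"
    unfolding replace_def by (intro tendsto_vec_lambda) (simp add: tendsto_vec_nth X)
  then have "((\<lambda>x. det (replace (X x)) / det (X x)) \<longlongrightarrow> matrix_inv A $ i $ j) F"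
    unfolding replace_def matrix_inv_cramer[OF detA] by (intro tendsto_divide tendsto_det X detA)
  moreover have "eventually (\<lambda>x. det (X x) \<noteq> 0) F"
    using tendsto_det[OF X] detA by (rule tendsto_imp_eventually_ne)
  then have "eventually (\<lambda>x. det (replace (X x)) / det (X x) = matrix_inv (X x) $ i $ j) F"
    by (rule eventually_mono) (simp add: matrix_inv_cramer replace_def)
  ultimately show "((\<lambda>x. matrix_inv (X x) $ i $ j) \<longlongrightarrow> matrix_inv A $ i $ j) F"
    by (rule Lim_transform_eventually)
qed

lemma scaleR_matrix_vector_mult: "(c *\<^sub>R A) *v x = c *\<^sub>R (A *v (x::real^'n))"
  by (rule scaleR_matrix_vector_assoc[symmetric])

lemma transpose_add: "transpose (A + B) = transpose A + transpose (B::real^'n^'m)"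
  by (simp add: transpose_def vec_eq_iff)

lemma transpose_diff: "transpose (A - B) = transpose A - transpose (B::real^'n^'m)"
  by (simp add: transpose_def vec_eq_iff)

lemma inner_transpose_matrix_vector: "(x::real^'n) \<bullet> (transpose M *v y) = (M *v x) \<bullet> y"
  by (metis transpose_matrix_vector dot_lmul_matrix inner_commute)

lemma inner_congruence:
  "(x::real^'n) \<bullet> ((transpose F ** P ** F) *v x) = (F *v x) \<bullet> (P *v (F *v x))"
  by (metis matrix_vector_mul_assoc inner_transpose_matrix_vector)

lemma inner_transpose_mult_self: "(x::real^'n) \<bullet> ((transpose C ** C) *v x) = (norm (C *v x))\<^sup>2"
  by (metis matrix_vector_mul_assoc inner_transpose_matrix_vector power2_norm_eq_inner)

lemma inner_scaleR_add_quadratic: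
  "(x::real^'n) \<bullet> ((s *\<^sub>R P + t *\<^sub>R H) *v x) = s * (x \<bullet> (P *v x)) + t * (x \<bullet> (H *v x))"
  by (simp add: matrix_vector_mult_add_rdistrib scaleR_matrix_vector_mult inner_add_right)

lemma loewner_le_iff_quadratic:
  assumes "psd M1" "psd M2"
  shows "loewner_le M1 M2 \<longleftrightarrow> (\<forall>x. x \<bullet> (M1 *v x) \<le> x \<bullet> (M2 *v x))"
  using assms
  by (simp add: loewner_le_def psd_def transpose_diff matrix_vector_mult_diff_rdistrib
      inner_diff_right)

lemma psd_imp_quadratic_nonneg: "psd M \<Longrightarrow> 0 \<le> x \<bullet> (M *v x)"
  unfolding psd_def by blast

lemma psd_0: "psd (0::real^'n^'n)"
  unfolding psd_def by (simp add: transpose_def vec_eq_iff)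

lemma psd_add: "psd P \<Longrightarrow> psd Q \<Longrightarrow> psd (P + Q)"
  unfolding psd_def
  by (simp add: transpose_add matrix_vector_mult_add_rdistrib inner_add_right)

lemma psd_scaleR: "psd P \<Longrightarrow> 0 \<le> c \<Longrightarrow> psd (c *\<^sub>R P)"
  unfolding psd_def by (simp add: transpose_scalar scaleR_matrix_vector_mult)

lemma psd_congruence: "psd P \<Longrightarrow> psd (transpose F ** P ** F)"
  unfolding psd_def by (simp add: inner_congruence matrix_transpose_mul matrix_mul_assoc)

lemma psd_transpose_mult_self: "psd (transpose C ** (C::real^'n^'m))"
  unfolding psd_def by (simp add: inner_transpose_mult_self matrix_transpose_mul)

lemma pd_imp_psd: "pd P \<Longrightarrow> psd P"
  unfolding pd_def psd_def by (metis inner_zero_left order_le_less)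

lemma pd_add_psd: "pd P \<Longrightarrow> psd Q \<Longrightarrow> pd (P + Q)"
  unfolding pd_def psd_def
  by (simp add: transpose_add matrix_vector_mult_add_rdistrib inner_add_right add_pos_nonneg)

lemma pd_scaleR: "pd P \<Longrightarrow> 0 < c \<Longrightarrow> pd (c *\<^sub>R P)"
  unfolding pd_def by (simp add: transpose_scalar scaleR_matrix_vector_mult)

lemma pd_imp_invertible:
  fixes M :: "real^'n^'n"
  assumes "pd M"
  shows "invertible M"
proof -
  have "\<forall>x. M *v x = 0 \<longrightarrow> x = 0"
    using assms unfolding pd_def by (metis inner_zero_right less_irrefl)
  then show ?thesis
    using matrix_left_invertible_ker invertible_left_inverse by blast
qed

lemma psd_LIMSEQ:
  fixes X :: "nat \<Rightarrow> real^'n^'n"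
  assumes X: "X \<longlonglongrightarrow> M" and psd: "\<And>i. psd (X i)"
  shows "psd M"
  unfolding psd_def
proof (intro conjI allI)
  have "(\<lambda>i. transpose (X i)) = X" using psd unfolding psd_def by auto
  then show "transpose M = M"
    using tendsto_transpose[OF X] X LIMSEQ_unique by metis
next
  fix x :: "real^'n"
  have "(\<lambda>i. x \<bullet> (X i *v x)) \<longlonglongrightarrow> x \<bullet> (M *v x)"
    by (intro tendsto_inner tendsto_const tendsto_matrix_vector_mult X)
  then show "0 \<le> x \<bullet> (M *v x)"
    using psd unfolding psd_def by (auto intro: LIMSEQ_le_const)
qed

definition policy_step :: "real^'n^'n \<Rightarrow> real^'m^'n \<Rightarrow> real^'n^'c \<Rightarrow> real^'n^'n
    \<Rightarrow> real^'m^'m \<Rightarrow> real \<Rightarrow> real^'n^'m \<Rightarrow> (real^'n^'n) \<times> (real^'n^'n)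
    \<Rightarrow> (real^'n^'n) \<times> (real^'n^'n)" where
  "policy_step A B C Q R \<gamma> L P =
     (let F = A + B ** L
      in (transpose C ** C + \<gamma> *\<^sub>R (transpose F ** fst P ** F),
          Q + transpose L ** R ** L + transpose F ** snd P ** F))"

lemma iterP_Suc_policy_step:
  "iterP A B C Q R \<gamma> \<mu> (Suc i) =
     policy_step A B C Q R \<gamma>
       (gainL A B R \<mu> (SigmaM \<gamma> \<mu> (fst (iterP A B C Q R \<gamma> \<mu> i)) (snd (iterP A B C Q R \<gamma> \<mu> i))))
       (iterP A B C Q R \<gamma> \<mu> i)"
  by (simp add: policy_step_def split_def Let_def)

lemma tendsto_policy_step:
  assumes "(L \<longlongrightarrow> L0) F" "(P \<longlongrightarrow> P0) F"
  shows "((\<lambda>x. policy_step A B C Q R \<gamma> (L x) (P x)) \<longlongrightarrow> policy_step A B C Q R \<gamma> L0 P0) F"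
  unfolding policy_step_def Let_def
  by (intro tendsto_Pair tendsto_add tendsto_scaleR tendsto_matrix_matrix_mult tendsto_transpose
      tendsto_fst tendsto_snd tendsto_const assms)

lemma tendsto_gainL:
  assumes "(S \<longlongrightarrow> S0) F" and "invertible (\<mu> *\<^sub>R R + transpose B ** S0 ** B)"
  shows "((\<lambda>x. gainL A B R \<mu> (S x)) \<longlongrightarrow> gainL A B R \<mu> S0) F"
  unfolding gainL_def
  by (intro tendsto_minus tendsto_matrix_matrix_mult tendsto_matrix_inv tendsto_add
      tendsto_const assms)

lemma iterP_psd:
  assumes "psd Q" "psd R" "0 \<le> \<gamma>"
  shows "psd (fst (iterP A B C Q R \<gamma> \<mu> i)) \<and> psd (snd (iterP A B C Q R \<gamma> \<mu> i))"
  by (induction i)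
    (simp_all add: iterP_Suc_policy_step policy_step_def Let_def psd_0 psd_add psd_scaleR
      psd_congruence psd_transpose_mult_self assms del: iterP.simps(2))

lemma iterP_limit_policy_fixed_point:
  assumes Q: "psd Q" and R: "pd R" and \<gamma>: "0 \<le> \<gamma>" and \<mu>: "0 < \<mu>" "\<mu> \<le> 1"
    and conv: "convergent (\<lambda>i. fst (iterP A B C Q R \<gamma> \<mu> i))"
      "convergent (\<lambda>i. snd (iterP A B C Q R \<gamma> \<mu> i))"
  defines "Pb \<equiv> Pbar_inf A B C Q R \<gamma> \<mu>" and "Ph \<equiv> Phat_inf A B C Q R \<gamma> \<mu>"
  shows "\<exists>L. policy_step A B C Q R \<gamma> L (Pb, Ph) = (Pb, Ph) \<and> psd Pb \<and> psd Ph"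
proof -
  define P where "P = iterP A B C Q R \<gamma> \<mu>"
  have Pb_lim: "(\<lambda>i. fst (P i)) \<longlonglongrightarrow> Pb" and Ph_lim: "(\<lambda>i. snd (P i)) \<longlonglongrightarrow> Ph"
    using conv unfolding P_def Pb_def Ph_def Pbar_inf_def Phat_inf_def convergent_LIMSEQ_iff
    by auto
  have P_lim: "P \<longlonglongrightarrow> (Pb, Ph)"
    using tendsto_Pair[OF Pb_lim Ph_lim] by simp
  have psd_iter: "psd (fst (P i))" "psd (snd (P i))" for i
    using iterP_psd[OF Q pd_imp_psd[OF R] \<gamma>, of A B C \<mu> i] unfolding P_def by simp_all
  have psd_lim: "psd Pb" "psd Ph"
    using psd_LIMSEQ[OF Pb_lim psd_iter(1)] psd_LIMSEQ[OF Ph_lim psd_iter(2)] by auto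
  define L where "L = gainL A B R \<mu> (SigmaM \<gamma> \<mu> Pb Ph)"
  have "pd (\<mu> *\<^sub>R R + transpose B ** SigmaM \<gamma> \<mu> Pb Ph ** B)"
    unfolding SigmaM_def using psd_lim \<gamma> \<mu> R
    by (intro pd_add_psd pd_scaleR psd_congruence psd_add psd_scaleR) auto
  then have "(\<lambda>i. gainL A B R \<mu> (SigmaM \<gamma> \<mu> (fst (P i)) (snd (P i)))) \<longlonglongrightarrow> L"
    unfolding L_def SigmaM_def
    by (intro tendsto_gainL tendsto_intros Pb_lim Ph_lim pd_imp_invertible)
  then have "(\<lambda>i. P (Suc i)) \<longlonglongrightarrow> policy_step A B C Q R \<gamma> L (Pb, Ph)"
    unfolding P_def iterP_Suc_policy_step
    by (intro tendsto_policy_step) (simp_all add: P_lim[unfolded P_def])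
  moreover have "(\<lambda>i. P (Suc i)) \<longlonglongrightarrow> (Pb, Ph)"
    using P_lim by (rule LIMSEQ_Suc)
  ultimately show ?thesis
    using LIMSEQ_unique psd_lim by blast
qed

lemma ennreal_suminf_orbit_le:
  fixes f :: "'a \<Rightarrow> 'a" and c V :: "'a \<Rightarrow> real"
  assumes step: "\<And>y. V y = c y + \<beta> * V (f y)"
    and c: "\<And>y. 0 \<le> c y" and V: "\<And>y. 0 \<le> V y" and \<beta>: "0 \<le> \<beta>"
  shows "(\<Sum>k. ennreal (\<beta> ^ k * c ((f ^^ k) x))) \<le> ennreal (V x)"
proof -
  have telescope: "V x = (\<Sum>k<N. \<beta> ^ k * c ((f ^^ k) x)) + \<beta> ^ N * V ((f ^^ N) x)" for N
  proof (induction N)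
    case (Suc N)
    then show ?case
      using step[of "(f ^^ N) x"] by (simp add: algebra_simps)
  qed simp
  have "(\<Sum>k<N. ennreal (\<beta> ^ k * c ((f ^^ k) x))) \<le> ennreal (V x)" for N
  proof -
    have "(\<Sum>k<N. \<beta> ^ k * c ((f ^^ k) x)) \<le> V x"
      using telescope[of N] V[of "(f ^^ N) x"] \<beta> by simp
    then show ?thesis
      using c \<beta> by (simp add: ennreal_leI)
  qed
  then show ?thesis
    unfolding suminf_eq_SUP by (rule SUP_least)
qed

lemma traj_linear_feedback:
  "traj A B x (\<lambda>k. L *v ((*v) (A + B ** L) ^^ k) x) k = ((*v) (A + B ** L) ^^ k) x"
  by (induction k)
    (simp_all add: matrix_vector_mult_add_rdistrib matrix_vector_mul_assoc)

lemma optval_le_policy_fixed_point: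
  assumes fixed: "policy_step A B C Q R \<gamma> L (Pb, Ph) = (Pb, Ph)"
    and Pb: "psd Pb" and Ph: "psd Ph" and Q: "psd Q" and R: "psd R"
    and \<gamma>: "0 \<le> \<gamma>" and \<mu>: "0 \<le> \<mu>" "\<mu> \<le> 1"
  shows "optval A B C Q R \<gamma> \<mu> x \<le> ennreal (x \<bullet> (((1 - \<mu>) *\<^sub>R Pb + \<mu> *\<^sub>R Ph) *v x))"
proof -
  define F where "F = A + B ** L"
  define u where "u k = L *v ((*v) F ^^ k) x" for k
  have traj: "traj A B x u = (\<lambda>k. ((*v) F ^^ k) x)"
    unfolding u_def F_def using traj_linear_feedback by blast
  have Pb_eq: "transpose C ** C + \<gamma> *\<^sub>R (transpose F ** Pb ** F) = Pb"
    and Ph_eq: "Q + transpose L ** R ** L + transpose F ** Ph ** F = Ph"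
    using fixed by (simp_all add: policy_step_def F_def Let_def)
  have Pb_step: "y \<bullet> (Pb *v y) = (norm (C *v y))\<^sup>2 + \<gamma> * ((F *v y) \<bullet> (Pb *v (F *v y)))" for y
    by (subst (1) Pb_eq[symmetric])
      (simp add: matrix_vector_mult_add_rdistrib scaleR_matrix_vector_mult inner_add_right
        inner_transpose_mult_self inner_congruence)
  \<comment> \<open>The factor 1 is the discount \<beta> = 1 of the undiscounted LQ term.\<close>
  have Ph_step: "y \<bullet> (Ph *v y)
      = (y \<bullet> (Q *v y) + (L *v y) \<bullet> (R *v (L *v y))) + 1 * ((F *v y) \<bullet> (Ph *v (F *v y)))" for y
    by (subst (1) Ph_eq[symmetric])
      (simp add: matrix_vector_mult_add_rdistrib inner_add_right inner_congruence)
  have C_sum: "(\<Sum>k. ennreal (\<gamma> ^ k * (norm (C *v traj A B x u k))\<^sup>2)) \<le> ennreal (x \<bullet> (Pb *v x))"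
    unfolding traj
    using ennreal_suminf_orbit_le[where V = "\<lambda>y. y \<bullet> (Pb *v y)" and f = "(*v) F",
        OF Pb_step _ psd_imp_quadratic_nonneg[OF Pb] \<gamma>]
    by simp
  have LQ_sum: "(\<Sum>k. ennreal (traj A B x u k \<bullet> (Q *v traj A B x u k) + u k \<bullet> (R *v u k)))
      \<le> ennreal (x \<bullet> (Ph *v x))"
    unfolding traj u_def
    using ennreal_suminf_orbit_le[where V = "\<lambda>y. y \<bullet> (Ph *v y)" and f = "(*v) F",
        OF Ph_step _ psd_imp_quadratic_nonneg[OF Ph]]
      psd_imp_quadratic_nonneg[OF Q] psd_imp_quadratic_nonneg[OF R] by simp
  have "optval A B C Q R \<gamma> \<mu> x \<le> cost A B C Q R \<gamma> \<mu> x u"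
    unfolding optval_def by (rule INF_lower) simp
  also have "\<dots> \<le> ennreal (1 - \<mu>) * ennreal (x \<bullet> (Pb *v x)) + ennreal \<mu> * ennreal (x \<bullet> (Ph *v x))"
    unfolding cost_def by (intro add_mono mult_left_mono C_sum LQ_sum) auto
  also have "\<dots> = ennreal (x \<bullet> (((1 - \<mu>) *\<^sub>R Pb + \<mu> *\<^sub>R Ph) *v x))"
    using \<mu> psd_imp_quadratic_nonneg[OF Pb] psd_imp_quadratic_nonneg[OF Ph]
    by (simp add: inner_scaleR_add_quadratic ennreal_mult ennreal_plus)
  finally show ?thesis .
qed

lemma optval_eq_imp_quadratic_le:
  assumes opt: "ennreal (x \<bullet> (((1 - \<mu>) *\<^sub>R P1 + \<mu> *\<^sub>R H1) *v x)) = optval A B C Q R \<gamma> \<mu> x"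
    and fixed: "policy_step A B C Q R \<gamma> L (P2, H2) = (P2, H2)"
    and P2: "psd P2" and H2: "psd H2" and Q: "psd Q" and R: "psd R"
    and \<gamma>: "0 \<le> \<gamma>" and \<mu>: "0 \<le> \<mu>" "\<mu> \<le> 1"
  shows "x \<bullet> (((1 - \<mu>) *\<^sub>R P1 + \<mu> *\<^sub>R H1) *v x) \<le> x \<bullet> (((1 - \<mu>) *\<^sub>R P2 + \<mu> *\<^sub>R H2) *v x)"
proof -
  have "ennreal (x \<bullet> (((1 - \<mu>) *\<^sub>R P1 + \<mu> *\<^sub>R H1) *v x))
      \<le> ennreal (x \<bullet> (((1 - \<mu>) *\<^sub>R P2 + \<mu> *\<^sub>R H2) *v x))"
    unfolding opt by (rule optval_le_policy_fixed_point[OF fixed P2 H2 Q R \<gamma> \<mu>])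
  moreover have "0 \<le> x \<bullet> (((1 - \<mu>) *\<^sub>R P2 + \<mu> *\<^sub>R H2) *v x)"
    using P2 H2 \<mu> by (simp add: inner_scaleR_add_quadratic psd_imp_quadratic_nonneg)
  ultimately show ?thesis
    by (simp only: ennreal_le_iff)
qed

lemma weighted_exchange_mono:
  fixes a1 a2 b1 b2 \<mu>1 \<mu>2 :: real
  assumes \<mu>: "0 \<le> \<mu>1" "\<mu>1 < \<mu>2" "\<mu>2 \<le> 1"
    and le1: "(1 - \<mu>1) * a1 + \<mu>1 * b1 \<le> (1 - \<mu>1) * a2 + \<mu>1 * b2"
    and le2: "(1 - \<mu>2) * a2 + \<mu>2 * b2 \<le> (1 - \<mu>2) * a1 + \<mu>2 * b1"
  shows "a1 \<le> a2 \<and> b2 \<le> b1"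
proof -
  define E1 where "E1 = (1 - \<mu>1) * (a2 - a1) + \<mu>1 * (b2 - b1)"
  define E2 where "E2 = (1 - \<mu>2) * (a2 - a1) + \<mu>2 * (b2 - b1)"
  have E1: "0 \<le> E1" and E2: "E2 \<le> 0"
    using le1 le2 unfolding E1_def E2_def by (simp_all add: algebra_simps)
  have "0 \<le> \<mu>2 * E1 - \<mu>1 * E2"
    using mult_nonneg_nonneg[of \<mu>2 E1] mult_nonneg_nonpos[of \<mu>1 E2] E1 E2 \<mu> by linarith
  also have "\<mu>2 * E1 - \<mu>1 * E2 = (\<mu>2 - \<mu>1) * (a2 - a1)"
    unfolding E1_def E2_def by (simp add: algebra_simps)
  finally have "a1 \<le> a2"
    using \<mu> by (simp add: zero_le_mult_iff)
  have "0 \<le> (1 - \<mu>2) * E1 - (1 - \<mu>1) * E2"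
    using mult_nonneg_nonneg[of "1 - \<mu>2" E1] mult_nonneg_nonpos[of "1 - \<mu>1" E2] E1 E2 \<mu>
    by linarith
  also have "(1 - \<mu>2) * E1 - (1 - \<mu>1) * E2 = (\<mu>2 - \<mu>1) * (b1 - b2)"
    unfolding E1_def E2_def by (simp add: algebra_simps)
  finally have "b2 \<le> b1"
    using \<mu> by (simp add: zero_le_mult_iff)
  with \<open>a1 \<le> a2\<close> show ?thesis ..
qed

theorem lemma3:
  fixes A :: "real^'nx^'nx" and B :: "real^'nu^'nx" and C :: "real^'nx^'nc"
    and Q :: "real^'nx^'nx" and R :: "real^'nu^'nu" and \<gamma> \<mu>1 \<mu>2 :: real
  assumes Q: "psd Q" and R: "pd R" and \<gamma>: "0 < \<gamma>" "\<gamma> < 1"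
    and ctrb: "controllable A B"
    and obsv: "\<exists>S. psd S \<and> S ** S = Q \<and> observable A S"
    \<comment> \<open>standing facts from the context, valid for every \<mu> in (0,1]:\<close>
    and conv: "\<And>\<mu>. 0 < \<mu> \<Longrightarrow> \<mu> \<le> 1 \<Longrightarrow>
                 convergent (\<lambda>i. fst (iterP A B C Q R \<gamma> \<mu> i)) \<and>
                 convergent (\<lambda>i. snd (iterP A B C Q R \<gamma> \<mu> i))"
    and opt: "\<And>\<mu> x0. 0 < \<mu> \<Longrightarrow> \<mu> \<le> 1 \<Longrightarrow>
                 ennreal (x0 \<bullet> (((1 - \<mu>) *\<^sub>R Pbar_inf A B C Q R \<gamma> \<mu>
                                  + \<mu> *\<^sub>R Phat_inf A B C Q R \<gamma> \<mu>) *v x0))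
                 = optval A B C Q R \<gamma> \<mu> x0"
    and \<mu>: "0 < \<mu>1" "\<mu>1 \<le> \<mu>2" "\<mu>2 \<le> 1"
  shows "loewner_le (Pbar_inf A B C Q R \<gamma> \<mu>1) (Pbar_inf A B C Q R \<gamma> \<mu>2) \<and>
         loewner_le (Phat_inf A B C Q R \<gamma> \<mu>2) (Phat_inf A B C Q R \<gamma> \<mu>1)"
proof -
  let ?Pb = "Pbar_inf A B C Q R \<gamma>" and ?Ph = "Phat_inf A B C Q R \<gamma>"
  let ?value = "\<lambda>\<mu> \<nu> x. (1 - \<mu>) * (x \<bullet> (?Pb \<nu> *v x)) + \<mu> * (x \<bullet> (?Ph \<nu> *v x))"
  have fixed_point: "\<exists>L. policy_step A B C Q R \<gamma> L (?Pb \<nu>, ?Ph \<nu>) = (?Pb \<nu>, ?Ph \<nu>)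
      \<and> psd (?Pb \<nu>) \<and> psd (?Ph \<nu>)" if "0 < \<nu>" "\<nu> \<le> 1" for \<nu>
    using conv[OF that]
    by (intro iterP_limit_policy_fixed_point[OF Q R less_imp_le[OF \<gamma>(1)] that]) simp_all
  then have psd_lim: "psd (?Pb \<nu>)" "psd (?Ph \<nu>)" if "0 < \<nu>" "\<nu> \<le> 1" for \<nu>
    using that by auto
  have optimal: "?value \<mu> \<mu> x \<le> ?value \<mu> \<nu> x"
    if \<mu>: "0 < \<mu>" "\<mu> \<le> 1" and \<nu>: "0 < \<nu>" "\<nu> \<le> 1" for \<mu> \<nu> x
  proof -
    obtain L where L: "policy_step A B C Q R \<gamma> L (?Pb \<nu>, ?Ph \<nu>) = (?Pb \<nu>, ?Ph \<nu>)"
      using fixed_point[OF \<nu>] by blast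
    show ?thesis
      using optval_eq_imp_quadratic_le[OF opt[OF \<mu>] L psd_lim[OF \<nu>] Q pd_imp_psd[OF R]] \<gamma> \<mu>
      by (simp add: inner_scaleR_add_quadratic)
  qed
  show ?thesis
  proof (cases "\<mu>1 = \<mu>2")
    case False
    have "x \<bullet> (?Pb \<mu>1 *v x) \<le> x \<bullet> (?Pb \<mu>2 *v x) \<and> x \<bullet> (?Ph \<mu>2 *v x) \<le> x \<bullet> (?Ph \<mu>1 *v x)" for x
      using optimal[of \<mu>1 \<mu>2 x] optimal[of \<mu>2 \<mu>1 x] \<mu> False
      by (intro weighted_exchange_mono) auto
    moreover have "psd (?Pb \<mu>1)" "psd (?Ph \<mu>1)" "psd (?Pb \<mu>2)" "psd (?Ph \<mu>2)"
      using psd_lim \<mu> by auto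
    ultimately show ?thesis
      by (simp add: loewner_le_iff_quadratic)
  qed (simp add: loewner_le_def psd_0)
qed

end
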